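(* Let $\eta$ be a Schwartz function on $\mathbb{R}$ and $\varphi$ the fixed cutoff. For $\tau,\lambda\in\mathbb{R}$ and $\Phi\in\mathbb{Z}\setminus\{0\}$ define $$K_G(\tau,\lambda,\Phi)=\int_{\mathbb{R}}\Big(\widehat\varphi(\tau-\mu)\widehat\varphi(\mu-\lambda)\frac1\Phi\mathcal{H}\widehat\eta\Big(\frac\mu\Phi\Big)+\widehat\varphi(\tau-\mu)\,\mathcal{H}\widehat\varphi(\mu-\lambda)\frac1\Phi\widehat\eta\Big(\frac\mu\Phi\Big)\Big)d\mu.$$ Then for every sufficiently large $\alpha>0$, uniformly in $\tau,\lambda,\Phi$, $$|K_G(\tau,\lambda,\Phi)|\lesssim_{\alpha,\varphi,\eta}\frac1{\langle\tau-\lambda\rangle^\alpha}\min\Big(\frac1{\langle\Phi\rangle},\frac1{\langle\lambda\rangle}\Big)+\frac1{\langle\tau-\lambda\rangle}\min\Big(\frac1{\langle\Phi\rangle},\frac1{\langle\tau\rangle}\Big)\lesssim\frac1{\langle\tau-\lambda\rangle}\min\Big(\frac1{\langle\Phi\rangle},\frac1{\langle\tau\rangle}\Big).$$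
   Context: $\langle x\rangle=(1+|x|^2)^{1/2}$; $\widehat{\ }$ denotes the Fourier transform on $\mathbb{R}$, $\widehat f(\tau)=\frac1{2\pi}\int f(t)e^{-it\tau}dt$. $\varphi:\mathbb{R}\to\mathbb{R}$ is a fixed smooth cutoff equal to $1$ on $[-1,1]$ and $0$ outside $[-2,2]$. $\mathcal{H}$ is the Hilbert transform, i.e. principal value convolution with $\frac1\tau$: $\mathcal{H}f(\xi)=\mathrm{p.v.}\int_{\mathbb{R}}\frac{f(\xi-\mu)}{\mu}d\mu$. (This kernel describes, after the shift $\tau\mapsto\tau-n^3$, $\lambda\mapsto\lambda-n^3$, the space-time Fourier transform of the Duhamel-type operator $\int_0^te^{i(t-t')n^3}\eta(\Phi(t-t'))\varphi(t')(\cdot)dt'$ multiplied by $\varphi(t)$.) *)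

theory Defs
  imports "HOL-Analysis.Analysis"
begin

definition jbr :: "real \<Rightarrow> real" where
  "jbr x = sqrt (1 + x\<^sup>2)"

fun iter_deriv :: "nat \<Rightarrow> (real \<Rightarrow> 'a::real_normed_vector) \<Rightarrow> real \<Rightarrow> 'a" where
  "iter_deriv 0 f = f"
| "iter_deriv (Suc k) f = (\<lambda>x. vector_derivative (iter_deriv k f) (at x))"

definition smooth_real :: "(real \<Rightarrow> 'a::real_normed_vector) \<Rightarrow> bool" where
  "smooth_real f \<longleftrightarrow> (\<forall>k x. iter_deriv k f differentiable (at x))"

definition schwartz :: "(real \<Rightarrow> complex) \<Rightarrow> bool" where
  "schwartz f \<longleftrightarrow> smooth_real f \<and>
     (\<forall>m k. \<exists>C. \<forall>x. \<bar>x\<bar> ^ m * norm (iter_deriv k f x) \<le> C)"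

definition cutoff :: "(real \<Rightarrow> real) \<Rightarrow> bool" where
  "cutoff \<phi> \<longleftrightarrow> smooth_real \<phi> \<and> (\<forall>t. \<bar>t\<bar> \<le> 1 \<longrightarrow> \<phi> t = 1)
      \<and> (\<forall>t. \<bar>t\<bar> > 2 \<longrightarrow> \<phi> t = 0)"

definition fourier :: "(real \<Rightarrow> complex) \<Rightarrow> real \<Rightarrow> complex" where
  "fourier f \<tau> = (LINT t|lborel. f t * cis (- (t * \<tau>))) / complex_of_real (2 * pi)"

definition hilbert :: "(real \<Rightarrow> complex) \<Rightarrow> real \<Rightarrow> complex" where
  "hilbert f \<xi> = Lim (at_right 0)
     (\<lambda>\<epsilon>. LINT \<mu>|lborel. indicator {\<mu>. \<epsilon> < \<bar>\<mu>\<bar>} \<mu> *\<^sub>R (f (\<xi> - \<mu>) / complex_of_real \<mu>))"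

definition KG :: "(real \<Rightarrow> real) \<Rightarrow> (real \<Rightarrow> complex) \<Rightarrow> real \<Rightarrow> real \<Rightarrow> int \<Rightarrow> complex" where
  "KG \<phi> \<eta> \<tau> lam \<Phi> =
     (LINT \<mu>|lborel.
        fourier (\<lambda>t. complex_of_real (\<phi> t)) (\<tau> - \<mu>)
          * fourier (\<lambda>t. complex_of_real (\<phi> t)) (\<mu> - lam)
          * (1 / of_int \<Phi>) * hilbert (fourier \<eta>) (\<mu> / of_int \<Phi>)
      + fourier (\<lambda>t. complex_of_real (\<phi> t)) (\<tau> - \<mu>)
          * hilbert (fourier (\<lambda>t. complex_of_real (\<phi> t))) (\<mu> - lam)
          * (1 / of_int \<Phi>) * fourier \<eta> (\<mu> / of_int \<Phi>))"

end

theory Submission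
  imports Defs "HOL-Probability.Sinc_Integral" "HOL-Real_Asymp.Real_Asymp"
begin

text \<open>
  The Fourier transforms of the Schwartz functions \<open>\<phi>\<close> and \<open>\<eta>\<close> decay like \<open>\<langle>y\<rangle>\<^sup>-\<^sup>4\<close> and
  satisfy the weighted Lipschitz bound \<open>|f a - f b| \<lesssim> |a - b| / \<langle>a\<rangle>\<close> for \<open>|a - b| \<le> 1\<close>;
  symmetrising the principal value shows that their Hilbert transforms are \<open>O(\<langle>\<xi>\<rangle>\<^sup>-\<^sup>1)\<close>.
  The integrand of \<open>K\<^sub>G\<close> is therefore bounded by
  \<open>\<langle>\<tau> - \<mu>\<rangle>\<^sup>-\<^sup>4 \<langle>\<mu> - \<lambda>\<rangle>\<^sup>-\<^sup>1 (|\<Phi>| \<langle>\<mu>/\<Phi>\<rangle>)\<^sup>-\<^sup>1\<close>. Peetre's inequality turns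
  \<open>\<langle>\<mu> - \<lambda>\<rangle>\<^sup>-\<^sup>1\<close> into \<open>2 \<langle>\<tau> - \<mu>\<rangle> \<langle>\<tau> - \<lambda>\<rangle>\<^sup>-\<^sup>1\<close>, and \<open>|\<Phi>| \<langle>\<mu>/\<Phi>\<rangle> = (\<Phi>\<^sup>2 + \<mu>\<^sup>2)\<^sup>1\<^sup>/\<^sup>2\<close>
  dominates both \<open>\<langle>\<Phi>\<rangle>/2\<close> and \<open>\<langle>\<tau>\<rangle> / (2 \<langle>\<tau> - \<mu>\<rangle>)\<close>. What remains is
  \<open>\<langle>\<tau> - \<mu>\<rangle>\<^sup>-\<^sup>2\<close>, whose integral is \<open>\<pi>\<close>. For \<open>\<alpha> \<ge> 2\<close> the first term of the intermediate
  bound is dominated by the second by the same Peetre argument.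
\<close>

section \<open>The Japanese bracket\<close>

lemma jbr_ge_1: "1 \<le> jbr x"
  unfolding jbr_def by simp

lemma jbr_pos: "0 < jbr x"
  using jbr_ge_1[of x] by linarith

lemma jbr_squared: "(jbr x)\<^sup>2 = 1 + x\<^sup>2"
  unfolding jbr_def by (simp add: add_pos_nonneg)

lemma jbr_minus: "jbr (- x) = jbr x"
  by (simp add: jbr_def)

lemma jbr_le_1_plus_square: "jbr x \<le> 1 + x\<^sup>2"
proof -
  have "jbr x * 1 \<le> jbr x * jbr x"
    using jbr_ge_1[of x] jbr_pos[of x] by (intro mult_left_mono) auto
  also have "\<dots> = 1 + x\<^sup>2"
    using jbr_squared[of x] by (simp add: power2_eq_square)
  finally show ?thesis by simp
qed

lemma jbr_le_2_abs:
  assumes "1 \<le> \<bar>x\<bar>"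
  shows "jbr x \<le> 2 * \<bar>x\<bar>"
proof -
  have "1 * 1 \<le> \<bar>x\<bar> * \<bar>x\<bar>"
    using assms by (intro mult_mono) auto
  hence "jbr x \<le> sqrt ((2 * \<bar>x\<bar>)\<^sup>2)"
    unfolding jbr_def by (intro real_sqrt_le_mono) (simp add: power2_eq_square abs_mult_self_eq)
  thus ?thesis
    by (simp only: real_sqrt_abs)
qed

lemma jbr_add_le: "jbr (a + b) \<le> 2 * jbr a * jbr b"
proof -
  have "4 * (1 + a\<^sup>2) * (1 + b\<^sup>2) - (1 + (a + b)\<^sup>2) = 3 + (a - b)\<^sup>2 + 2 * a\<^sup>2 + 2 * b\<^sup>2 + 4 * (a * b)\<^sup>2"
    by (simp add: power2_eq_square algebra_simps)
  moreover have "0 \<le> 3 + (a - b)\<^sup>2 + 2 * a\<^sup>2 + 2 * b\<^sup>2 + 4 * (a * b)\<^sup>2"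
    by (intro add_nonneg_nonneg) auto
  ultimately have "sqrt (1 + (a + b)\<^sup>2) \<le> sqrt (4 * (1 + a\<^sup>2) * (1 + b\<^sup>2))"
    by (intro real_sqrt_le_mono) linarith
  also have "\<dots> = sqrt 4 * jbr a * jbr b"
    unfolding jbr_def by (simp only: real_sqrt_mult)
  also have "sqrt 4 = (2::real)"
    by (simp add: real_sqrt_unique)
  finally show ?thesis
    by (simp add: jbr_def)
qed

lemma inverse_jbr_le_shift: "1 / jbr x \<le> 2 * jbr (y - x) / jbr y"
proof -
  have "jbr y \<le> 2 * jbr (y - x) * jbr x"
    using jbr_add_le[of "y - x" x] by simp
  thus ?thesis
    using jbr_pos[of x] jbr_pos[of y] by (simp add: field_simps)
qed

lemma
  fixes c :: real
  shows integrable_inverse_1_plus_square_shift: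
      "integrable lborel (\<lambda>x. inverse (1 + (c - x)\<^sup>2))"
      "integrable lborel (\<lambda>x. inverse (1 + (c + x)\<^sup>2))"
    and integral_inverse_1_plus_square_shift:
      "(LINT x|lborel. inverse (1 + (c - x)\<^sup>2)) = pi"
      "(LINT x|lborel. inverse (1 + (c + x)\<^sup>2)) = pi"
proof -
  have int: "integrable lborel (\<lambda>x::real. inverse (1 + x\<^sup>2))"
    using integrable_inverse_1_plus_square by (simp add: set_integrable_def einterval_def)
  have val: "(LINT x|lborel. inverse (1 + x\<^sup>2)) = pi"
    using LBINT_inverse_1_plus_square
    by (simp add: interval_lebesgue_integral_def set_lebesgue_integral_def einterval_def)
  show "integrable lborel (\<lambda>x. inverse (1 + (c - x)\<^sup>2))"
       "integrable lborel (\<lambda>x. inverse (1 + (c + x)\<^sup>2))"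
    using lborel_integrable_real_affine[OF int, of "-1" c] lborel_integrable_real_affine[OF int, of 1 c]
    by simp_all
  show "(LINT x|lborel. inverse (1 + (c - x)\<^sup>2)) = pi" "(LINT x|lborel. inverse (1 + (c + x)\<^sup>2)) = pi"
    using lborel_integral_real_affine[of "-1" "\<lambda>x. inverse (1 + x\<^sup>2)" c]
      lborel_integral_real_affine[of 1 "\<lambda>x. inverse (1 + x\<^sup>2)" c] val
    by simp_all
qed

lemma integrable_continuous_decay:
  fixes g :: "real \<Rightarrow> 'a::{banach, second_countable_topology}"
  assumes "continuous_on UNIV g" and "\<And>x. norm (g x) \<le> C / (1 + x\<^sup>2)"
  shows "integrable lborel g"
proof (rule Bochner_Integration.integrable_bound)
  show "integrable lborel (\<lambda>x. C * inverse (1 + (0 - x)\<^sup>2))"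
    using integrable_inverse_1_plus_square_shift(1) by (rule integrable_mult_right)
  show "g \<in> borel_measurable lborel"
    using borel_measurable_continuous_onI[OF assms(1)] by simp
  show "AE x in lborel. norm (g x) \<le> norm (C * inverse (1 + (0 - x)\<^sup>2))"
    using assms(2) by (intro AE_I2) (simp add: divide_inverse order_trans[OF _ abs_ge_self])
qed

lemma tendsto_zero_decay:
  fixes g :: "real \<Rightarrow> 'a::real_normed_vector"
  assumes "\<And>x. norm (g x) \<le> C / (1 + x\<^sup>2)"
  shows "(g \<longlongrightarrow> 0) at_top" "(g \<longlongrightarrow> 0) at_bot"
proof -
  have "((\<lambda>x::real. C / (1 + x\<^sup>2)) \<longlongrightarrow> 0) at_top" "((\<lambda>x::real. C / (1 + x\<^sup>2)) \<longlongrightarrow> 0) at_bot"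
    by real_asymp+
  thus "(g \<longlongrightarrow> 0) at_top" "(g \<longlongrightarrow> 0) at_bot"
    using assms by (auto intro!: Lim_null_comparison[of _ "\<lambda>x. C / (1 + x\<^sup>2)"])
qed

section \<open>The Fourier transform\<close>

lemma norm_cis_diff_le: "norm (cis x - cis y) \<le> \<bar>x - y\<bar>"
proof -
  have "(norm (cis x - cis y))\<^sup>2 = (cos x - cos y)\<^sup>2 + (sin x - sin y)\<^sup>2"
    by (simp add: cmod_power2)
  also have "\<dots> = (2 * sin ((x - y) / 2))\<^sup>2 * ((sin ((x + y) / 2))\<^sup>2 + (cos ((x + y) / 2))\<^sup>2)"
  proof -
    have "sin ((y - x) / 2) = - sin ((x - y) / 2)"
      by (metis minus_diff_eq minus_divide_left sin_minus)
    thus ?thesis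
      unfolding cos_diff_cos sin_diff_sin by algebra
  qed
  also have "\<dots> = (2 * sin ((x - y) / 2))\<^sup>2"
    by simp
  finally have "norm (cis x - cis y) = \<bar>2 * sin ((x - y) / 2)\<bar>"
    by (metis abs_norm_cancel real_sqrt_abs)
  also have "\<dots> \<le> 2 * \<bar>(x - y) / 2\<bar>"
    using abs_sin_x_le_abs_x[of "(x - y) / 2"] by (simp add: abs_mult)
  finally show ?thesis
    by simp
qed

lemma integrable_mult_cis:
  assumes "integrable lborel (f :: real \<Rightarrow> complex)"
  shows "integrable lborel (\<lambda>t. f t * cis (- (t * a)))"
proof (rule Bochner_Integration.integrable_bound[OF assms])
  have "(\<lambda>t::real. cis (- (t * a))) \<in> borel_measurable borel"
    by (intro borel_measurable_continuous_onI continuous_intros)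
  thus "(\<lambda>t. f t * cis (- (t * a))) \<in> borel_measurable lborel"
    using assms by (auto intro!: borel_measurable_times dest: borel_measurable_integrable)
qed (auto simp: norm_mult)

lemma norm_fourier_le: "norm (fourier f a) \<le> (LINT t|lborel. norm (f t)) / (2 * pi)"
proof -
  have "norm (LINT t|lborel. f t * cis (- (t * a))) \<le> (LINT t|lborel. norm (f t * cis (- (t * a))))"
    by (rule integral_norm_bound)
  also have "\<dots> = (LINT t|lborel. norm (f t))"
    by (simp add: norm_mult)
  finally show ?thesis
    unfolding fourier_def norm_divide by (simp add: divide_right_mono)
qed

lemma norm_fourier_diff_le:
  assumes "integrable lborel f" and "integrable lborel (\<lambda>t. t *\<^sub>R f t)"
  shows "norm (fourier f a - fourier f b) \<le> \<bar>a - b\<bar> * (LINT t|lborel. norm (t *\<^sub>R f t)) / (2 * pi)"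
proof -
  let ?e = "\<lambda>t. f t * cis (- (t * a)) - f t * cis (- (t * b))"
  have "fourier f a - fourier f b = (LINT t|lborel. ?e t) / complex_of_real (2 * pi)"
    unfolding fourier_def using integrable_mult_cis[OF assms(1)]
    by (simp add: Bochner_Integration.integral_diff diff_divide_distrib)
  hence "norm (fourier f a - fourier f b) = norm (LINT t|lborel. ?e t) / (2 * pi)"
    by (simp add: norm_divide)
  also have "norm (LINT t|lborel. ?e t) \<le> (LINT t|lborel. norm (?e t))"
    by (rule integral_norm_bound)
  also have "\<dots> \<le> (LINT t|lborel. \<bar>a - b\<bar> * norm (t *\<^sub>R f t))"
  proof (rule integral_mono)
    show "integrable lborel (\<lambda>t. norm (?e t))"
      using integrable_mult_cis[OF assms(1)] by auto
    show "integrable lborel (\<lambda>t. \<bar>a - b\<bar> * norm (t *\<^sub>R f t))"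
      by (intro integrable_mult_right integrable_norm assms(2))
    fix t
    have "norm (?e t) = norm (f t) * norm (cis (- (t * a)) - cis (- (t * b)))"
      by (simp add: norm_mult[symmetric] right_diff_distrib)
    also have "\<dots> \<le> norm (f t) * \<bar>(- (t * a)) - (- (t * b))\<bar>"
      by (intro mult_left_mono norm_cis_diff_le) auto
    also have "\<dots> = \<bar>a - b\<bar> * norm (t *\<^sub>R f t)"
      using abs_mult[of t "b - a"] by (simp add: algebra_simps abs_minus_commute)
    finally show "norm (?e t) \<le> \<bar>a - b\<bar> * norm (t *\<^sub>R f t)" .
  qed
  finally show ?thesis
    by (simp add: divide_right_mono)
qed

lemma has_vector_derivative_cis_linear:
  "((\<lambda>t. cis (- (t * a))) has_vector_derivative (of_real (- a) * (\<i> * cis (- (t * a))))) (at t)"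
proof -
  have "((\<lambda>t. - (t * a)) has_derivative (\<lambda>h. - (h * a))) (at t)"
    by (auto intro!: derivative_eq_intros)
  from has_derivative_cis[OF this] show ?thesis
    unfolding has_vector_derivative_def by (simp add: scaleR_conv_of_real algebra_simps)
qed

lemma fourier_derivative:
  fixes f f' :: "real \<Rightarrow> complex"
  assumes deriv: "\<And>t. (f has_vector_derivative f' t) (at t)" and cont: "\<And>t. isCont f' t"
    and int: "integrable lborel f" "integrable lborel f'"
    and lim: "(f \<longlongrightarrow> 0) at_top" "(f \<longlongrightarrow> 0) at_bot"
  shows "fourier f' a = \<i> * of_real a * fourier f a"
proof -
  define F where "F t = f t * cis (- (t * a))" for t
  define G where "G t = f' t * cis (- (t * a)) - \<i> * of_real a * F t" for t
  have F_lim: "(F \<longlongrightarrow> 0) F'" if "(f \<longlongrightarrow> 0) F'" for F'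
  proof -
    have "((\<lambda>t. norm (F t)) \<longlongrightarrow> 0) F'"
      using tendsto_norm[OF that] unfolding F_def by (simp add: norm_mult)
    thus ?thesis
      by (simp add: tendsto_norm_zero_iff)
  qed
  have "(LBINT t=-\<infinity>..\<infinity>. G t) = 0 - 0"
  proof (rule interval_integral_FTC_integrable[where F = F])
    fix x
    show "(F has_vector_derivative G x) (at x)"
      using has_vector_derivative_mult[OF deriv[of x] has_vector_derivative_cis_linear[of a x]]
      unfolding F_def G_def by (simp add: algebra_simps)
    have "isCont f x" "isCont (\<lambda>t. cis (- (t * a))) x"
      by (metis deriv has_vector_derivative_cis_linear has_vector_derivative_continuous)+
    thus "isCont G x"
      unfolding G_def F_def using cont[of x] by (auto intro!: continuous_intros)
  next
    show "set_integrable lborel (einterval (- \<infinity>) \<infinity>) G"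
      unfolding G_def F_def using integrable_mult_cis[OF int(1)] integrable_mult_cis[OF int(2)]
      by (simp add: set_integrable_def einterval_def)
    show "((F \<circ> real_of_ereal) \<longlongrightarrow> 0) (at_right (- \<infinity>))" "((F \<circ> real_of_ereal) \<longlongrightarrow> 0) (at_left \<infinity>)"
      unfolding ereal_tendsto_simps1 by (rule F_lim[OF lim(2)], rule F_lim[OF lim(1)])
  qed simp
  hence "(LINT t|lborel. G t) = 0"
    by (simp add: interval_lebesgue_integral_def set_lebesgue_integral_def einterval_def)
  hence "(LINT t|lborel. f' t * cis (- (t * a))) = \<i> * of_real a * (LINT t|lborel. F t)"
    unfolding G_def F_def using integrable_mult_cis[OF int(1)] integrable_mult_cis[OF int(2)]
    by (subst (asm) Bochner_Integration.integral_diff) auto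
  thus ?thesis
    unfolding fourier_def F_def by simp
qed

section \<open>Schwartz functions\<close>

lemma norm_diff_le_of_multiplier:
  fixes F G :: "real \<Rightarrow> complex"
  assumes G: "\<And>x. G x = \<i> * of_real x * F x"
    and G_bound: "\<And>x. norm (G x) \<le> N" and G_lip: "\<And>a b. norm (G a - G b) \<le> \<bar>a - b\<bar> * L"
    and a: "2 < \<bar>a\<bar>" and ab: "\<bar>a - b\<bar> \<le> 1"
  shows "norm (F a - F b) \<le> 2 * (L + N) * \<bar>a - b\<bar> / jbr a"
proof -
  have b: "1 \<le> \<bar>b\<bar>"
    using a ab by linarith
  have nz: "a \<noteq> 0" "b \<noteq> 0"
    using a b by auto
  have N: "0 \<le> N"
    using G_bound[of 0] norm_ge_zero order_trans by blast
  have "norm (G 1 - G 0) \<le> L"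
    using G_lip[of 1 0] by simp
  hence L: "0 \<le> L"
    using norm_ge_zero order_trans by blast
  have "F a - F b = (G a - G b) / (\<i> * of_real a) + G b * (of_real (b - a) / (\<i> * of_real a * of_real b))"
    using nz by (simp add: G field_simps)
  hence "norm (F a - F b) \<le> norm ((G a - G b) / (\<i> * of_real a))
      + norm (G b * (of_real (b - a) / (\<i> * of_real a * of_real b)))"
    by (simp only: norm_triangle_ineq)
  also have "\<dots> = norm (G a - G b) / \<bar>a\<bar> + norm (G b) * (\<bar>a - b\<bar> / (\<bar>a\<bar> * \<bar>b\<bar>))"
    by (simp add: norm_mult norm_divide abs_minus_commute flip: of_real_diff)
  also have "\<dots> \<le> \<bar>a - b\<bar> * L / \<bar>a\<bar> + N * (\<bar>a - b\<bar> / \<bar>a\<bar>)"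
  proof (intro add_mono divide_right_mono mult_mono G_lip G_bound)
    show "\<bar>a - b\<bar> / (\<bar>a\<bar> * \<bar>b\<bar>) \<le> \<bar>a - b\<bar> / \<bar>a\<bar>"
      using b nz by (intro divide_left_mono) (auto simp: mult_le_cancel_left1)
  qed (use N in auto)
  also have "\<dots> = (L + N) * \<bar>a - b\<bar> / \<bar>a\<bar>"
    by (simp add: algebra_simps add_divide_distrib)
  also have "\<dots> \<le> (L + N) * \<bar>a - b\<bar> / (jbr a / 2)"
  proof (rule divide_left_mono)
    show "jbr a / 2 \<le> \<bar>a\<bar>"
      using jbr_le_2_abs[of a] a by simp
  qed (use jbr_pos[of a] L N nz in auto)
  finally show ?thesis
    by (simp add: algebra_simps)
qed

context
  fixes f :: "real \<Rightarrow> complex"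
  assumes f: "schwartz f"
begin

lemma schwartz_iter_deriv_has_vector_derivative:
  "(iter_deriv k f has_vector_derivative iter_deriv (Suc k) f x) (at x)"
  using f unfolding schwartz_def smooth_real_def by (simp add: vector_derivative_works)

lemma continuous_on_schwartz_iter_deriv: "continuous_on UNIV (iter_deriv k f)"
  by (metis continuous_at_imp_continuous_on has_vector_derivative_continuous
      schwartz_iter_deriv_has_vector_derivative)

lemma isCont_schwartz_iter_deriv: "isCont (iter_deriv k f) x"
  using continuous_on_schwartz_iter_deriv by (simp add: continuous_on_eq_continuous_at)

lemma schwartz_iter_deriv_decay: "\<exists>C. \<forall>x. \<bar>x\<bar> ^ j * norm (iter_deriv k f x) \<le> C / (1 + x\<^sup>2)"
proof -
  have "\<forall>m. \<exists>C. \<forall>x. \<bar>x\<bar> ^ m * norm (iter_deriv k f x) \<le> C"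
    using f unfolding schwartz_def by blast
  then obtain C0 C2 where C0: "\<And>x. \<bar>x\<bar> ^ j * norm (iter_deriv k f x) \<le> C0"
    and C2: "\<And>x. \<bar>x\<bar> ^ (j + 2) * norm (iter_deriv k f x) \<le> C2"
    by meson
  have "(1 + x\<^sup>2) * (\<bar>x\<bar> ^ j * norm (iter_deriv k f x)) \<le> C0 + C2" for x
  proof -
    have pow: "\<bar>x\<bar> ^ (j + 2) = \<bar>x\<bar> ^ j * x\<^sup>2"
      by (metis power_add power2_abs)
    have "(1 + x\<^sup>2) * (\<bar>x\<bar> ^ j * norm (iter_deriv k f x))
        = \<bar>x\<bar> ^ j * norm (iter_deriv k f x) + \<bar>x\<bar> ^ (j + 2) * norm (iter_deriv k f x)"
      unfolding pow by algebra
    thus ?thesis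
      using C0[of x] C2[of x] by linarith
  qed
  hence "\<bar>x\<bar> ^ j * norm (iter_deriv k f x) \<le> (C0 + C2) / (1 + x\<^sup>2)" for x
    by (simp add: pos_le_divide_eq add_pos_nonneg mult.commute)
  thus ?thesis
    by blast
qed

lemma integrable_schwartz_iter_deriv: "integrable lborel (iter_deriv k f)"
proof -
  obtain C where "\<And>x. \<bar>x\<bar> ^ 0 * norm (iter_deriv k f x) \<le> C / (1 + x\<^sup>2)"
    using schwartz_iter_deriv_decay by blast
  thus ?thesis
    using continuous_on_schwartz_iter_deriv by (intro integrable_continuous_decay[of _ C]) simp_all
qed

lemma integrable_schwartz_iter_deriv_moment: "integrable lborel (\<lambda>x. x *\<^sub>R iter_deriv k f x)"
proof -
  obtain C where "\<And>x. \<bar>x\<bar> ^ 1 * norm (iter_deriv k f x) \<le> C / (1 + x\<^sup>2)"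
    using schwartz_iter_deriv_decay by blast
  moreover have "continuous_on UNIV (\<lambda>x. x *\<^sub>R iter_deriv k f x)"
    using continuous_on_schwartz_iter_deriv[of k] by (intro continuous_intros)
  ultimately show ?thesis
    by (intro integrable_continuous_decay[of _ C]) simp_all
qed

lemma fourier_schwartz_iter_deriv_Suc:
  "fourier (iter_deriv (Suc k) f) a = \<i> * of_real a * fourier (iter_deriv k f) a"
proof -
  obtain C where "\<And>x. \<bar>x\<bar> ^ 0 * norm (iter_deriv k f x) \<le> C / (1 + x\<^sup>2)"
    using schwartz_iter_deriv_decay by blast
  hence decay: "\<And>x. norm (iter_deriv k f x) \<le> C / (1 + x\<^sup>2)"
    by simp
  show ?thesis
    by (rule fourier_derivative[OF schwartz_iter_deriv_has_vector_derivative isCont_schwartz_iter_deriv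
          integrable_schwartz_iter_deriv integrable_schwartz_iter_deriv tendsto_zero_decay[OF decay]])
qed

lemma fourier_schwartz_iter_deriv: "fourier (iter_deriv k f) a = (\<i> * of_real a) ^ k * fourier f a"
proof (induction k)
  case (Suc k)
  show ?case
    unfolding fourier_schwartz_iter_deriv_Suc Suc.IH by (simp add: mult.assoc)
qed simp

lemma fourier_schwartz_decay: "\<exists>M. \<forall>y. norm (fourier f y) \<le> M / (1 + y\<^sup>2)\<^sup>2"
proof -
  define N0 where "N0 = (LINT t|lborel. norm (f t)) / (2 * pi)"
  define N4 where "N4 = (LINT t|lborel. norm (iter_deriv 4 f t)) / (2 * pi)"
  have "norm (fourier f y) \<le> 2 * (N0 + N4) / (1 + y\<^sup>2)\<^sup>2" for y
  proof -
    have bound0: "norm (fourier f y) \<le> N0"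
      unfolding N0_def by (rule norm_fourier_le)
    have bound4: "y ^ 4 * norm (fourier f y) \<le> N4"
      using norm_fourier_le[of "iter_deriv 4 f" y] unfolding N4_def fourier_schwartz_iter_deriv
      by (simp add: norm_mult norm_power power_mult_distrib)
    have "(1 + y\<^sup>2)\<^sup>2 \<le> 2 * (1 + y ^ 4)"
      using zero_le_power2[of "y\<^sup>2 - 1"] by (simp add: power2_eq_square algebra_simps power4_eq_xxxx)
    hence "(1 + y\<^sup>2)\<^sup>2 * norm (fourier f y) \<le> 2 * (1 + y ^ 4) * norm (fourier f y)"
      by (intro mult_right_mono) auto
    also have "\<dots> \<le> 2 * (N0 + N4)"
      using bound0 bound4 by (simp add: algebra_simps)
    moreover have "0 < (1 + y\<^sup>2)\<^sup>2"
      by (intro zero_less_power) (simp add: add_pos_nonneg)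
    ultimately show ?thesis
      by (simp add: pos_le_divide_eq mult.commute)
  qed
  thus ?thesis
    by blast
qed

lemma fourier_schwartz_weighted_lipschitz:
  "\<exists>L. \<forall>a b. \<bar>a - b\<bar> \<le> 1 \<longrightarrow> norm (fourier f a - fourier f b) \<le> L * \<bar>a - b\<bar> / jbr a"
proof -
  define f1 where "f1 = iter_deriv 1 f"
  define L0 where "L0 = (LINT t|lborel. norm (t *\<^sub>R f t)) / (2 * pi)"
  define L1 where "L1 = (LINT t|lborel. norm (t *\<^sub>R f1 t)) / (2 * pi)"
  define N1 where "N1 = (LINT t|lborel. norm (f1 t)) / (2 * pi)"
  have lip0: "norm (fourier f a - fourier f b) \<le> \<bar>a - b\<bar> * L0" for a b
    using norm_fourier_diff_le[OF integrable_schwartz_iter_deriv[of 0] integrable_schwartz_iter_deriv_moment[of 0]]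
    unfolding L0_def by simp
  have lip1: "norm (fourier f1 a - fourier f1 b) \<le> \<bar>a - b\<bar> * L1" for a b
    using norm_fourier_diff_le[OF integrable_schwartz_iter_deriv[of 1] integrable_schwartz_iter_deriv_moment[of 1]]
    unfolding L1_def f1_def by simp
  have nonneg: "0 \<le> L0" "0 \<le> L1" "0 \<le> N1"
    unfolding L0_def L1_def N1_def by (simp_all add: integral_nonneg_AE)
  have "norm (fourier f a - fourier f b) \<le> (3 * L0 + 2 * (L1 + N1)) * \<bar>a - b\<bar> / jbr a"
    if ab: "\<bar>a - b\<bar> \<le> 1" for a b
  proof (cases "\<bar>a\<bar> \<le> 2")
    case True
    have "jbr a \<le> sqrt 9"
      unfolding jbr_def using True abs_le_square_iff[of a 2] by (intro real_sqrt_le_mono) simp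
    hence "jbr a \<le> 3"
      by (simp add: real_sqrt_unique)
    hence "jbr a * (L0 * \<bar>a - b\<bar>) \<le> 3 * (L0 * \<bar>a - b\<bar>)"
      using nonneg by (intro mult_right_mono) auto
    hence "\<bar>a - b\<bar> * L0 \<le> 3 * L0 * \<bar>a - b\<bar> / jbr a"
      using jbr_pos[of a] by (simp add: pos_le_divide_eq mult_ac)
    moreover have "3 * L0 * \<bar>a - b\<bar> / jbr a \<le> (3 * L0 + 2 * (L1 + N1)) * \<bar>a - b\<bar> / jbr a"
      using jbr_pos[of a] nonneg by (intro divide_right_mono mult_right_mono) auto
    ultimately show ?thesis
      using lip0[of a b] by linarith
  next
    case False
    have "norm (fourier f a - fourier f b) \<le> 2 * (L1 + N1) * \<bar>a - b\<bar> / jbr a"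
    proof (rule norm_diff_le_of_multiplier)
      show "fourier f1 x = \<i> * of_real x * fourier f x" for x
        using fourier_schwartz_iter_deriv_Suc[of 0 x] unfolding f1_def by simp
      show "norm (fourier f1 x) \<le> N1" for x
        unfolding N1_def by (rule norm_fourier_le)
    qed (use lip1 False ab in auto)
    also have "\<dots> \<le> (3 * L0 + 2 * (L1 + N1)) * \<bar>a - b\<bar> / jbr a"
      using jbr_pos[of a] nonneg by (intro divide_right_mono mult_right_mono) auto
    finally show ?thesis .
  qed
  thus ?thesis
    by blast
qed

end

lemma smooth_real_has_real_derivative:
  assumes "smooth_real \<phi>"
  shows "(iter_deriv k \<phi> has_real_derivative iter_deriv (Suc k) \<phi> x) (at x)"
  using assms unfolding smooth_real_def
  by (simp add: vector_derivative_works has_real_derivative_iff_has_vector_derivative)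

lemma iter_deriv_of_real:
  assumes "smooth_real \<phi>"
  shows "iter_deriv k (\<lambda>t. complex_of_real (\<phi> t)) = (\<lambda>t. complex_of_real (iter_deriv k \<phi> t))"
proof (induction k)
  case (Suc k)
  have "vector_derivative (\<lambda>t. complex_of_real (iter_deriv k \<phi> t)) (at x)
      = complex_of_real (iter_deriv (Suc k) \<phi> x)" for x
    by (rule vector_derivative_at[OF has_vector_derivative_of_real[OF smooth_real_has_real_derivative[OF assms]]])
  thus ?case
    by (simp add: Suc.IH fun_eq_iff)
qed simp

lemma cutoff_iter_deriv_eq_0:
  assumes "cutoff \<phi>" and "2 < \<bar>x\<bar>"
  shows "iter_deriv k \<phi> x = 0"
  using assms(2)
proof (induction k arbitrary: x)
  case 0
  thus ?case
    using assms(1) unfolding cutoff_def by simp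
next
  case (Suc k)
  have "((\<lambda>_. 0) has_vector_derivative (0::real)) (at x)"
    by simp
  moreover have "open {y::real. 2 < \<bar>y\<bar>}"
    by (intro open_Collect_less continuous_intros)
  ultimately have "(iter_deriv k \<phi> has_vector_derivative 0) (at x)"
    by (rule has_vector_derivative_transform_within_open) (use Suc in auto)
  thus ?case
    by (simp add: vector_derivative_at)
qed

lemma cutoff_schwartz:
  assumes "cutoff \<phi>"
  shows "schwartz (\<lambda>t. complex_of_real (\<phi> t))"
proof -
  have smooth: "smooth_real \<phi>"
    using assms unfolding cutoff_def by blast
  note deriv = smooth_real_has_real_derivative[OF smooth]
  have "\<exists>C. \<forall>x. \<bar>x\<bar> ^ m * norm (iter_deriv k (\<lambda>t. complex_of_real (\<phi> t)) x) \<le> C" for m k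
  proof -
    have "continuous_on {-2..2} (iter_deriv k \<phi>)"
      by (intro continuous_at_imp_continuous_on ballI DERIV_isCont[OF deriv])
    hence "bounded (iter_deriv k \<phi> ` {-2..2})"
      by (intro compact_imp_bounded compact_continuous_image) auto
    then obtain B where "\<And>x. x \<in> {-2..2} \<Longrightarrow> \<bar>iter_deriv k \<phi> x\<bar> \<le> B"
      unfolding bounded_iff by (auto simp del: atLeastAtMost_iff)
    hence B: "\<And>x. \<bar>x\<bar> \<le> 2 \<Longrightarrow> \<bar>iter_deriv k \<phi> x\<bar> \<le> B"
      by (simp add: abs_le_iff)
    have "\<bar>x\<bar> ^ m * \<bar>iter_deriv k \<phi> x\<bar> \<le> 2 ^ m * B" for x
    proof (cases "\<bar>x\<bar> \<le> 2")
      case True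
      thus ?thesis
        using B[of x] by (intro mult_mono power_mono) auto
    next
      case False
      thus ?thesis
        using cutoff_iter_deriv_eq_0[OF assms, of x k] B[of 0] by simp
    qed
    thus ?thesis
      unfolding iter_deriv_of_real[OF smooth] by (intro exI[of _ "2 ^ m * B"]) simp
  qed
  moreover have "smooth_real (\<lambda>t. complex_of_real (\<phi> t))"
    unfolding smooth_real_def iter_deriv_of_real[OF smooth]
    using has_vector_derivative_of_real[OF deriv] by (blast intro: differentiableI_vector)
  ultimately show ?thesis
    unfolding schwartz_def by blast
qed

section \<open>The Hilbert transform\<close>

lemma continuous_on_weighted_lipschitz:
  fixes g :: "real \<Rightarrow> 'a::real_normed_vector"
  assumes lip: "\<And>a b. \<bar>a - b\<bar> \<le> 1 \<Longrightarrow> norm (g a - g b) \<le> L * \<bar>a - b\<bar> / jbr a"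
  shows "continuous_on UNIV g"
proof -
  have "isCont g a" for a
  proof -
    have "\<forall>\<^sub>F b in at a. norm (g b - g a) \<le> \<bar>L\<bar> * \<bar>b - a\<bar>"
      unfolding eventually_at
    proof (intro exI[of _ 1] conjI ballI impI)
      fix b
      assume "b \<noteq> a \<and> dist b a < 1"
      hence ab: "\<bar>a - b\<bar> \<le> 1"
        by (simp add: dist_real_def abs_minus_commute)
      have "norm (g b - g a) \<le> L * \<bar>a - b\<bar> / jbr a"
        using lip[OF ab] by (simp add: norm_minus_commute)
      also have "\<dots> \<le> \<bar>L\<bar> * \<bar>a - b\<bar> / jbr a"
        using jbr_pos[of a] by (intro divide_right_mono mult_right_mono) auto
      also have "\<dots> \<le> \<bar>L\<bar> * \<bar>a - b\<bar> / 1"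
        using jbr_ge_1[of a] by (intro divide_left_mono) auto
      finally show "norm (g b - g a) \<le> \<bar>L\<bar> * \<bar>b - a\<bar>"
        by (simp add: abs_minus_commute)
    qed simp
    moreover have "((\<lambda>b. \<bar>L\<bar> * \<bar>b - a\<bar>) \<longlongrightarrow> 0) (at a)"
      by (rule tendsto_eq_intros refl tendsto_ident_at)+ simp
    ultimately have "((\<lambda>b. g b - g a) \<longlongrightarrow> 0) (at a)"
      by (rule Lim_null_comparison)
    thus ?thesis
      unfolding isCont_def by (simp add: LIM_zero_iff)
  qed
  thus ?thesis
    by (simp add: continuous_on_eq_continuous_at)
qed

lemma truncated_integral_symmetric:
  fixes k :: "real \<Rightarrow> 'a::{banach, second_countable_topology}"
  assumes int: "integrable lborel (\<lambda>\<mu>. indicator {\<mu>. \<epsilon> < \<bar>\<mu>\<bar>} \<mu> *\<^sub>R k \<mu>)" and "0 \<le> \<epsilon>"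
  shows "(LINT \<mu>|lborel. indicator {\<mu>. \<epsilon> < \<bar>\<mu>\<bar>} \<mu> *\<^sub>R k \<mu>)
    = (LINT \<mu>|lborel. indicator {\<epsilon><..} \<mu> *\<^sub>R (k \<mu> + k (- \<mu>)))"
proof -
  define A where "A \<mu> = indicator {\<epsilon><..} \<mu> *\<^sub>R k \<mu>" for \<mu>
  define C where "C \<mu> = indicator {..<- \<epsilon>} \<mu> *\<^sub>R k \<mu>" for \<mu>
  have integrable_restrict: "integrable lborel (\<lambda>\<mu>. indicator S \<mu> *\<^sub>R k \<mu>)"
    if "S \<in> sets lborel" "S \<subseteq> {\<mu>. \<epsilon> < \<bar>\<mu>\<bar>}" for S
  proof -
    have "integrable lborel (\<lambda>\<mu>. indicator S \<mu> *\<^sub>R (indicator {\<mu>. \<epsilon> < \<bar>\<mu>\<bar>} \<mu> *\<^sub>R k \<mu>))"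
      by (rule integrable_mult_indicator[OF that(1) int])
    also have "(\<lambda>\<mu>. indicator S \<mu> *\<^sub>R (indicator {\<mu>. \<epsilon> < \<bar>\<mu>\<bar>} \<mu> *\<^sub>R k \<mu>)) = (\<lambda>\<mu>. indicator S \<mu> *\<^sub>R k \<mu>)"
      using that(2) by (auto simp: indicator_def fun_eq_iff)
    finally show ?thesis .
  qed
  have A: "integrable lborel A"
    unfolding A_def using \<open>0 \<le> \<epsilon>\<close> by (intro integrable_restrict) auto
  have C: "integrable lborel C"
    unfolding C_def using \<open>0 \<le> \<epsilon>\<close> by (intro integrable_restrict) auto
  have C_reflect: "(\<lambda>\<mu>. C (0 + (- 1) * \<mu>)) = (\<lambda>\<mu>. indicator {\<epsilon><..} \<mu> *\<^sub>R k (- \<mu>))"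
    unfolding C_def by (auto simp: indicator_def)
  have C': "integrable lborel (\<lambda>\<mu>. indicator {\<epsilon><..} \<mu> *\<^sub>R k (- \<mu>))"
    using lborel_integrable_real_affine_iff[of "- 1" C 0] C unfolding C_reflect by simp
  have "(LINT \<mu>|lborel. indicator {\<mu>. \<epsilon> < \<bar>\<mu>\<bar>} \<mu> *\<^sub>R k \<mu>) = (LINT \<mu>|lborel. A \<mu> + C \<mu>)"
    unfolding A_def C_def using \<open>0 \<le> \<epsilon>\<close>
    by (intro Bochner_Integration.integral_cong) (auto simp: indicator_def)
  also have "\<dots> = (LINT \<mu>|lborel. A \<mu>) + (LINT \<mu>|lborel. C (0 + (- 1) * \<mu>))"
    using A C lborel_integral_real_affine[of "- 1" C 0] by simp
  also have "\<dots> = (LINT \<mu>|lborel. indicator {\<epsilon><..} \<mu> *\<^sub>R (k \<mu> + k (- \<mu>)))"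
    unfolding C_reflect A_def using A C' unfolding A_def
    by (simp add: scaleR_add_right)
  finally show ?thesis .
qed

lemma tendsto_integral_indicator_greaterThan:
  fixes D :: "real \<Rightarrow> 'a::{banach, second_countable_topology}"
  assumes int: "integrable lborel (\<lambda>\<mu>. indicator {0<..} \<mu> *\<^sub>R D \<mu>)"
    and near: "\<And>\<mu>. 0 < \<mu> \<Longrightarrow> \<mu> \<le> 1 \<Longrightarrow> norm (D \<mu>) \<le> c"
  shows "((\<lambda>\<epsilon>. LINT \<mu>|lborel. indicator {\<epsilon><..} \<mu> *\<^sub>R D \<mu>)
    \<longlongrightarrow> (LINT \<mu>|lborel. indicator {0<..} \<mu> *\<^sub>R D \<mu>)) (at_right 0)"
proof -
  let ?I = "\<lambda>\<epsilon>. LINT \<mu>|lborel. indicator {\<epsilon><..} \<mu> *\<^sub>R D \<mu>"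
  have int_eps: "integrable lborel (\<lambda>\<mu>. indicator {\<epsilon><..} \<mu> *\<^sub>R D \<mu>)" if "0 \<le> \<epsilon>" for \<epsilon>
  proof -
    have "(\<lambda>\<mu>. indicator {\<epsilon><..} \<mu> *\<^sub>R indicator {0<..} \<mu> *\<^sub>R D \<mu>) = (\<lambda>\<mu>. indicator {\<epsilon><..} \<mu> *\<^sub>R D \<mu>)"
      using that by (auto simp: indicator_def)
    thus ?thesis
      using integrable_mult_indicator[OF _ int, of "{\<epsilon><..}"] by simp
  qed
  have "norm (?I \<epsilon> - ?I 0) \<le> c * \<epsilon>" if "0 < \<epsilon>" "\<epsilon> \<le> 1" for \<epsilon>
  proof -
    have "norm (?I \<epsilon> - ?I 0)
        \<le> (LINT \<mu>|lborel. norm (indicator {\<epsilon><..} \<mu> *\<^sub>R D \<mu> - indicator {0<..} \<mu> *\<^sub>R D \<mu>))"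
      using int_eps[of \<epsilon>] int_eps[of 0] that
      by (simp flip: Bochner_Integration.integral_diff add: integral_norm_bound)
    also have "\<dots> \<le> (LINT \<mu>|lborel. indicator {0<..\<epsilon>} \<mu> * c)"
    proof (rule integral_mono)
      show "integrable lborel (\<lambda>\<mu>. norm (indicator {\<epsilon><..} \<mu> *\<^sub>R D \<mu> - indicator {0<..} \<mu> *\<^sub>R D \<mu>))"
        using int_eps[of \<epsilon>] int_eps[of 0] that by auto
      show "integrable lborel (\<lambda>\<mu>. indicator {0<..\<epsilon>} \<mu> * c)"
        using that by (intro integrable_mult_left integrable_real_indicator) auto
      show "norm (indicator {\<epsilon><..} \<mu> *\<^sub>R D \<mu> - indicator {0<..} \<mu> *\<^sub>R D \<mu>) \<le> indicator {0<..\<epsilon>} \<mu> * c" for \<mu>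
        using near[of \<mu>] that by (auto simp: indicator_def)
    qed
    also have "\<dots> = c * \<epsilon>"
      using that by simp
    finally show ?thesis .
  qed
  hence "\<forall>\<^sub>F \<epsilon> in at_right 0. norm (?I \<epsilon> - ?I 0) \<le> c * \<epsilon>"
    unfolding eventually_at_right_field by (intro exI[of _ 1]) auto
  moreover have "((\<lambda>\<epsilon>. c * \<epsilon>) \<longlongrightarrow> 0) (at_right 0)"
    by (rule tendsto_eq_intros refl tendsto_ident_at)+ simp
  ultimately have "((\<lambda>\<epsilon>. ?I \<epsilon> - ?I 0) \<longlongrightarrow> 0) (at_right 0)"
    by (rule Lim_null_comparison)
  thus ?thesis
    by (simp add: LIM_zero_iff)
qed

lemma tail_quotient_le:
  fixes n M y \<mu> \<xi> :: real
  assumes \<mu>: "1 \<le> \<mu>" and n: "0 \<le> n" "n \<le> M / (1 + y\<^sup>2)\<^sup>2" and peetre: "jbr \<xi> \<le> 2 * jbr y * jbr \<mu>"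
  shows "n / \<mu> \<le> 4 * M / jbr \<xi> * inverse (1 + y\<^sup>2)"
proof -
  have y: "0 < 1 + y\<^sup>2"
    by (simp add: add_pos_nonneg)
  have "0 \<le> M / (1 + y\<^sup>2)\<^sup>2"
    using n by linarith
  hence M: "0 \<le> M"
    using y by (simp add: zero_le_divide_iff)
  have "jbr y * jbr \<mu> \<le> (1 + y\<^sup>2) * (2 * \<mu>)"
    using jbr_le_1_plus_square[of y] jbr_le_2_abs[of \<mu>] jbr_pos[of y] jbr_pos[of \<mu>] \<mu>
    by (intro mult_mono) auto
  hence \<xi>: "jbr \<xi> \<le> 4 * \<mu> * (1 + y\<^sup>2)"
    using peetre by (simp add: algebra_simps)
  have "n / \<mu> \<le> M / (1 + y\<^sup>2)\<^sup>2 / \<mu>"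
    using n \<mu> by (intro divide_right_mono) auto
  also have "\<dots> = 4 * M / (4 * \<mu> * (1 + y\<^sup>2) * (1 + y\<^sup>2))"
  proof -
    define z where "z = 1 + y\<^sup>2"
    have "z \<noteq> 0" "\<mu> \<noteq> 0"
      using y \<mu> unfolding z_def by auto
    hence "M / z\<^sup>2 / \<mu> = 4 * M / (4 * \<mu> * z * z)"
      by (simp add: power2_eq_square field_simps)
    thus ?thesis
      unfolding z_def .
  qed
  also have "\<dots> \<le> 4 * M / (jbr \<xi> * (1 + y\<^sup>2))"
    using \<xi> M \<mu> y jbr_pos[of \<xi>] by (intro divide_left_mono mult_right_mono mult_pos_pos) auto
  also have "\<dots> = 4 * M / jbr \<xi> * inverse (1 + y\<^sup>2)"
    by (simp add: field_simps)
  finally show ?thesis .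
qed

lemma norm_symmetric_quotient_near_le:
  fixes g :: "real \<Rightarrow> 'a::real_normed_field"
  assumes lip: "\<And>a b. \<bar>a - b\<bar> \<le> 1 \<Longrightarrow> norm (g a - g b) \<le> L * \<bar>a - b\<bar> / jbr a"
    and "0 < \<mu>" "\<mu> \<le> 1"
  shows "norm ((g (\<xi> - \<mu>) - g (\<xi> + \<mu>)) / of_real \<mu>) \<le> 2 * L / jbr \<xi>"
proof -
  have "norm (g (\<xi> - \<mu>) - g (\<xi> + \<mu>)) \<le> norm (g \<xi> - g (\<xi> + \<mu>)) + norm (g \<xi> - g (\<xi> - \<mu>))"
    using norm_triangle_ineq4[of "g \<xi> - g (\<xi> + \<mu>)" "g \<xi> - g (\<xi> - \<mu>)"] by simp
  also have "\<dots> \<le> L * \<mu> / jbr \<xi> + L * \<mu> / jbr \<xi>"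
    using lip[of \<xi> "\<xi> + \<mu>"] lip[of \<xi> "\<xi> - \<mu>"] assms(2,3) by (intro add_mono) auto
  finally show ?thesis
    using assms(2) by (simp add: norm_divide pos_divide_le_eq mult_ac)
qed

lemma norm_symmetric_quotient_tail_le:
  fixes g :: "real \<Rightarrow> 'a::real_normed_field"
  assumes dec: "\<And>y. norm (g y) \<le> M / (1 + y\<^sup>2)\<^sup>2" and "1 \<le> \<mu>"
  shows "norm ((g (\<xi> - \<mu>) - g (\<xi> + \<mu>)) / of_real \<mu>)
    \<le> 4 * M / jbr \<xi> * (inverse (1 + (\<xi> - \<mu>)\<^sup>2) + inverse (1 + (\<xi> + \<mu>)\<^sup>2))"
proof -
  have "norm (g (\<xi> - \<mu>) - g (\<xi> + \<mu>)) / \<mu> \<le> norm (g (\<xi> - \<mu>)) / \<mu> + norm (g (\<xi> + \<mu>)) / \<mu>"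
    using assms(2) by (simp add: add_divide_distrib[symmetric] divide_right_mono norm_triangle_ineq4)
  also have "\<dots> \<le> 4 * M / jbr \<xi> * inverse (1 + (\<xi> - \<mu>)\<^sup>2) + 4 * M / jbr \<xi> * inverse (1 + (\<xi> + \<mu>)\<^sup>2)"
  proof (intro add_mono tail_quotient_le dec norm_ge_zero assms(2))
    show "jbr \<xi> \<le> 2 * jbr (\<xi> - \<mu>) * jbr \<mu>"
      using jbr_add_le[of "\<xi> - \<mu>" \<mu>] by simp
    show "jbr \<xi> \<le> 2 * jbr (\<xi> + \<mu>) * jbr \<mu>"
      using jbr_add_le[of "\<xi> + \<mu>" "- \<mu>"] by (simp add: jbr_minus)
  qed
  finally show ?thesis
    using assms(2) by (simp add: norm_divide distrib_left)
qed

text \<open>The first term comes from the weighted Lipschitz bound for \<open>\<mu> \<le> 1\<close>, the second from the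
  decay of \<open>g\<close> for \<open>\<mu> > 1\<close>.\<close>
definition symmetric_majorant :: "real \<Rightarrow> real \<Rightarrow> real \<Rightarrow> real \<Rightarrow> real" where
  "symmetric_majorant L M \<xi> \<mu> = indicator {0<..1} \<mu> * (2 * L / jbr \<xi>)
    + 4 * M / jbr \<xi> * (inverse (1 + (\<xi> - \<mu>)\<^sup>2) + inverse (1 + (\<xi> + \<mu>)\<^sup>2))"

lemma integrable_symmetric_majorant: "integrable lborel (symmetric_majorant L M \<xi>)"
  unfolding symmetric_majorant_def using integrable_inverse_1_plus_square_shift
  by (intro Bochner_Integration.integrable_add integrable_mult_left integrable_mult_right) auto

lemma integral_symmetric_majorant:
  "(LINT \<mu>|lborel. symmetric_majorant L M \<xi> \<mu>) = (2 * L + 8 * M * pi) / jbr \<xi>"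
  unfolding symmetric_majorant_def using integrable_inverse_1_plus_square_shift
  by (simp add: Bochner_Integration.integral_add integral_inverse_1_plus_square_shift add_divide_distrib)

lemma norm_symmetric_quotient_le:
  fixes g :: "real \<Rightarrow> 'a::real_normed_field"
  assumes dec: "\<And>y. norm (g y) \<le> M / (1 + y\<^sup>2)\<^sup>2"
    and lip: "\<And>a b. \<bar>a - b\<bar> \<le> 1 \<Longrightarrow> norm (g a - g b) \<le> L * \<bar>a - b\<bar> / jbr a"
  shows "norm (indicator {0<..} \<mu> *\<^sub>R ((g (\<xi> - \<mu>) - g (\<xi> + \<mu>)) / of_real \<mu>))
    \<le> symmetric_majorant L M \<xi> \<mu>"
proof -
  have "norm (g 0) \<le> M"
    using dec[of 0] by simp
  hence "0 \<le> M"
    using norm_ge_zero[of "g 0"] by linarith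
  hence tail: "0 \<le> 4 * M / jbr \<xi> * (inverse (1 + (\<xi> - \<mu>)\<^sup>2) + inverse (1 + (\<xi> + \<mu>)\<^sup>2))"
    using jbr_pos[of \<xi>] by (intro mult_nonneg_nonneg add_nonneg_nonneg) (auto simp: add_pos_nonneg)
  consider "\<mu> \<le> 0" | "0 < \<mu>" "\<mu> \<le> 1" | "1 < \<mu>"
    by linarith
  thus ?thesis
  proof cases
    case 1
    thus ?thesis
      unfolding symmetric_majorant_def using tail by simp
  next
    case 2
    thus ?thesis
      using norm_symmetric_quotient_near_le[OF lip, of \<mu> \<xi>] tail unfolding symmetric_majorant_def
      by simp
  next
    case 3
    thus ?thesis
      using norm_symmetric_quotient_tail_le[OF dec, of \<mu> \<xi>] unfolding symmetric_majorant_def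
      by simp
  qed
qed

lemma integrable_truncated_quotient:
  fixes g :: "real \<Rightarrow> complex"
  assumes meas: "(\<lambda>\<mu>. g (\<xi> - \<mu>)) \<in> borel_measurable lborel"
    and dec: "\<And>y. norm (g y) \<le> M * inverse (1 + y\<^sup>2)" and "0 < \<epsilon>"
  shows "integrable lborel (\<lambda>\<mu>. indicator {\<mu>. \<epsilon> < \<bar>\<mu>\<bar>} \<mu> *\<^sub>R (g (\<xi> - \<mu>) / complex_of_real \<mu>))"
proof (rule Bochner_Integration.integrable_bound)
  have "norm (g 0) \<le> M"
    using dec[of 0] by simp
  hence M: "0 \<le> M"
    using norm_ge_zero[of "g 0"] by linarith
  show "integrable lborel (\<lambda>\<mu>. M / \<epsilon> * inverse (1 + (\<xi> - \<mu>)\<^sup>2))"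
    using integrable_inverse_1_plus_square_shift(1) by (rule integrable_mult_right)
  show "(\<lambda>\<mu>. indicator {\<mu>. \<epsilon> < \<bar>\<mu>\<bar>} \<mu> *\<^sub>R (g (\<xi> - \<mu>) / complex_of_real \<mu>)) \<in> borel_measurable lborel"
    using meas by (intro borel_measurable_scaleR borel_measurable_divide) auto
  have "norm (g (\<xi> - \<mu>)) / \<bar>\<mu>\<bar> \<le> M / \<epsilon> * inverse (1 + (\<xi> - \<mu>)\<^sup>2)" if "\<epsilon> < \<bar>\<mu>\<bar>" for \<mu>
  proof -
    have "norm (g (\<xi> - \<mu>)) / \<bar>\<mu>\<bar> \<le> M * inverse (1 + (\<xi> - \<mu>)\<^sup>2) / \<epsilon>"
      using dec[of "\<xi> - \<mu>"] that \<open>0 < \<epsilon>\<close> M by (intro frac_le) (auto simp: add_pos_nonneg)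
    thus ?thesis
      by simp
  qed
  thus "AE \<mu> in lborel. norm (indicator {\<mu>. \<epsilon> < \<bar>\<mu>\<bar>} \<mu> *\<^sub>R (g (\<xi> - \<mu>) / complex_of_real \<mu>))
      \<le> norm (M / \<epsilon> * inverse (1 + (\<xi> - \<mu>)\<^sup>2))"
    using M \<open>0 < \<epsilon>\<close> by (intro AE_I2) (auto simp: indicator_def norm_divide add_pos_nonneg)
qed

lemma norm_hilbert_le:
  fixes g :: "real \<Rightarrow> complex"
  assumes dec: "\<And>y. norm (g y) \<le> M / (1 + y\<^sup>2)\<^sup>2"
    and lip: "\<And>a b. \<bar>a - b\<bar> \<le> 1 \<Longrightarrow> norm (g a - g b) \<le> L * \<bar>a - b\<bar> / jbr a"
  shows "norm (hilbert g \<xi>) \<le> (2 * L + 8 * M * pi) / jbr \<xi>"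
proof -
  define D where "D \<mu> = (g (\<xi> - \<mu>) - g (\<xi> + \<mu>)) / complex_of_real \<mu>" for \<mu>
  have cont: "continuous_on UNIV g"
    using lip by (rule continuous_on_weighted_lipschitz)
  have meas: "(\<lambda>\<mu>. g (\<xi> - \<mu>)) \<in> borel_measurable lborel" "(\<lambda>\<mu>. g (\<xi> + \<mu>)) \<in> borel_measurable lborel"
    by (simp, intro borel_measurable_continuous_onI continuous_on_compose2[OF cont] continuous_intros, simp)+
  have D_le: "norm (indicator {0<..} \<mu> *\<^sub>R D \<mu>) \<le> symmetric_majorant L M \<xi> \<mu>" for \<mu>
    unfolding D_def using dec lip by (rule norm_symmetric_quotient_le)
  have D_int: "integrable lborel (\<lambda>\<mu>. indicator {0<..} \<mu> *\<^sub>R D \<mu>)"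
  proof (rule Bochner_Integration.integrable_bound[OF integrable_symmetric_majorant])
    show "(\<lambda>\<mu>. indicator {0<..} \<mu> *\<^sub>R D \<mu>) \<in> borel_measurable lborel"
      unfolding D_def using meas by (intro borel_measurable_scaleR borel_measurable_divide borel_measurable_diff) auto
    show "AE \<mu> in lborel. norm (indicator {0<..} \<mu> *\<^sub>R D \<mu>) \<le> norm (symmetric_majorant L M \<xi> \<mu>)"
      using D_le by (intro AE_I2) (metis abs_ge_self order_trans real_norm_def)
  qed
  have near: "norm (D \<mu>) \<le> 2 * L / jbr \<xi>" if "0 < \<mu>" "\<mu> \<le> 1" for \<mu>
    unfolding D_def using lip that by (rule norm_symmetric_quotient_near_le)
  have "norm (g 0) \<le> M"
    using dec[of 0] by simp
  hence M: "0 \<le> M"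
    using norm_ge_zero[of "g 0"] by linarith
  have dec': "norm (g y) \<le> M * inverse (1 + y\<^sup>2)" for y
  proof -
    have "M / (1 + y\<^sup>2)\<^sup>2 \<le> M / (1 + y\<^sup>2)"
      using M by (intro divide_left_mono) (auto simp: power2_eq_square add_pos_nonneg)
    thus ?thesis
      using dec[of y] by (simp add: divide_inverse)
  qed
  have truncated: "(LINT \<mu>|lborel. indicator {\<mu>. \<epsilon> < \<bar>\<mu>\<bar>} \<mu> *\<^sub>R (g (\<xi> - \<mu>) / complex_of_real \<mu>))
      = (LINT \<mu>|lborel. indicator {\<epsilon><..} \<mu> *\<^sub>R D \<mu>)" if "0 < \<epsilon>" for \<epsilon>
    using integrable_truncated_quotient[OF meas(1) dec' that] that unfolding D_def
    by (simp add: truncated_integral_symmetric diff_divide_distrib)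
  have "((\<lambda>\<epsilon>. LINT \<mu>|lborel. indicator {\<mu>. \<epsilon> < \<bar>\<mu>\<bar>} \<mu> *\<^sub>R (g (\<xi> - \<mu>) / complex_of_real \<mu>))
      \<longlongrightarrow> (LINT \<mu>|lborel. indicator {0<..} \<mu> *\<^sub>R D \<mu>)) (at_right 0)"
    using tendsto_integral_indicator_greaterThan[OF D_int near]
    by (rule tendsto_cong[THEN iffD2, rotated])
       (auto simp: truncated eventually_at_right_field intro!: exI[of _ 1])
  hence "hilbert g \<xi> = (LINT \<mu>|lborel. indicator {0<..} \<mu> *\<^sub>R D \<mu>)"
    unfolding hilbert_def by (intro tendsto_Lim) auto
  also have "norm \<dots> \<le> (LINT \<mu>|lborel. symmetric_majorant L M \<xi> \<mu>)"
    using D_le by (intro integral_norm_bound[THEN order_trans] integral_mono integrable_norm D_int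
        integrable_symmetric_majorant)
  finally show ?thesis
    unfolding integral_symmetric_majorant .
qed

section \<open>The kernel\<close>

lemma fourier_schwartz_bounds:
  assumes "schwartz f"
  shows "\<exists>K\<ge>0. \<forall>y. norm (fourier f y) \<le> K / (1 + y\<^sup>2)\<^sup>2 \<and> norm (hilbert (fourier f) y) \<le> K / jbr y"
proof -
  obtain M where M: "\<And>y. norm (fourier f y) \<le> M / (1 + y\<^sup>2)\<^sup>2"
    using fourier_schwartz_decay[OF assms] by blast
  obtain L where L: "\<And>a b. \<bar>a - b\<bar> \<le> 1 \<Longrightarrow> norm (fourier f a - fourier f b) \<le> L * \<bar>a - b\<bar> / jbr a"
    using fourier_schwartz_weighted_lipschitz[OF assms] by blast
  define K where "K = max M (2 * L + 8 * M * pi)"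
  have "norm (fourier f y) \<le> K / (1 + y\<^sup>2)\<^sup>2" for y
    using M[of y] by (rule order_trans) (simp add: K_def divide_right_mono)
  moreover have "norm (hilbert (fourier f) y) \<le> K / jbr y" for y
  proof -
    have "norm (hilbert (fourier f) y) \<le> (2 * L + 8 * M * pi) / jbr y"
      using M L by (rule norm_hilbert_le)
    thus ?thesis
      by (rule order_trans) (use jbr_pos[of y] in \<open>simp add: K_def divide_right_mono\<close>)
  qed
  moreover have "0 \<le> K"
  proof -
    have "norm (fourier f 0) \<le> M"
      using M[of 0] by simp
    hence "0 \<le> M"
      by (rule order_trans[OF norm_ge_zero])
    thus ?thesis
      by (simp add: K_def)
  qed
  ultimately show ?thesis
    by blast
qed

lemma divide_le_divide_jbr:
  fixes K :: real
  assumes "0 \<le> K"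
  shows "K / (1 + y\<^sup>2)\<^sup>2 \<le> K / jbr y"
proof -
  have "1 + y\<^sup>2 \<le> (1 + y\<^sup>2)\<^sup>2"
    using mult_right_mono[of 1 "1 + y\<^sup>2" "1 + y\<^sup>2"] by (simp add: power2_eq_square)
  hence "jbr y \<le> (1 + y\<^sup>2)\<^sup>2"
    using jbr_le_1_plus_square[of y] by linarith
  thus ?thesis
    using assms jbr_pos[of y] by (intro divide_left_mono mult_pos_pos) (auto simp: add_pos_nonneg)
qed

lemma inverse_scaled_jbr_le:
  fixes p \<mu> \<tau> :: real
  assumes p: "1 \<le> \<bar>p\<bar>"
  shows "1 / (\<bar>p\<bar> * jbr (\<mu> / p)) \<le> 2 * jbr (\<tau> - \<mu>) * min (1 / jbr p) (1 / jbr \<tau>)"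
proof -
  have "1 \<le> p\<^sup>2"
    using p by (metis abs_le_square_iff abs_one one_power2)
  have r: "\<bar>p\<bar> * jbr (\<mu> / p) = sqrt (p\<^sup>2 + \<mu>\<^sup>2)"
  proof -
    have "\<bar>p\<bar> * jbr (\<mu> / p) = sqrt (p\<^sup>2 * (1 + (\<mu> / p)\<^sup>2))"
      unfolding jbr_def by (simp add: real_sqrt_mult)
    also have "p\<^sup>2 * (1 + (\<mu> / p)\<^sup>2) = p\<^sup>2 + \<mu>\<^sup>2"
      using p by (auto simp: field_simps power2_eq_square)
    finally show ?thesis .
  qed
  have r_ge_\<mu>: "jbr \<mu> \<le> sqrt (p\<^sup>2 + \<mu>\<^sup>2)"
    unfolding jbr_def using \<open>1 \<le> p\<^sup>2\<close> by simp
  have "\<bar>p\<bar> \<le> sqrt (p\<^sup>2 + \<mu>\<^sup>2)"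
    using real_sqrt_le_mono[of "p\<^sup>2" "p\<^sup>2 + \<mu>\<^sup>2"] by simp
  hence r_ge_p: "jbr p / 2 \<le> sqrt (p\<^sup>2 + \<mu>\<^sup>2)"
    using jbr_le_2_abs[OF p] by linarith
  have r_pos: "0 < sqrt (p\<^sup>2 + \<mu>\<^sup>2)"
    using r_ge_p jbr_pos[of p] by linarith
  have "1 / sqrt (p\<^sup>2 + \<mu>\<^sup>2) \<le> 2 * jbr (\<tau> - \<mu>) * (1 / jbr p)"
  proof -
    have "1 / sqrt (p\<^sup>2 + \<mu>\<^sup>2) \<le> 1 / (jbr p / 2)"
      using r_ge_p r_pos jbr_pos[of p] by (intro divide_left_mono mult_pos_pos) auto
    also have "\<dots> \<le> 2 * jbr (\<tau> - \<mu>) * (1 / jbr p)"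
      using jbr_ge_1[of "\<tau> - \<mu>"] jbr_pos[of p] by (simp add: field_simps)
    finally show ?thesis .
  qed
  moreover have "1 / sqrt (p\<^sup>2 + \<mu>\<^sup>2) \<le> 2 * jbr (\<tau> - \<mu>) * (1 / jbr \<tau>)"
  proof -
    have "1 / sqrt (p\<^sup>2 + \<mu>\<^sup>2) \<le> 1 / jbr \<mu>"
      using r_ge_\<mu> r_pos jbr_pos[of \<mu>] by (intro divide_left_mono mult_pos_pos) auto
    also have "\<dots> \<le> 2 * jbr (\<tau> - \<mu>) / jbr \<tau>"
      by (rule inverse_jbr_le_shift)
    finally show ?thesis
      by simp
  qed
  ultimately show ?thesis
    unfolding r using jbr_ge_1[of "\<tau> - \<mu>"] by (simp add: min_mult_distrib_left)
qed

lemma kernel_weight_le: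
  fixes p \<mu> \<tau> lam :: real
  assumes "1 \<le> \<bar>p\<bar>"
  shows "1 / (1 + (\<tau> - \<mu>)\<^sup>2)\<^sup>2 * (1 / jbr (\<mu> - lam)) * (1 / (\<bar>p\<bar> * jbr (\<mu> / p)))
     \<le> 4 * inverse (1 + (\<tau> - \<mu>)\<^sup>2) * (1 / jbr (\<tau> - lam) * min (1 / jbr p) (1 / jbr \<tau>))"
proof -
  define X where "X = jbr (\<tau> - \<mu>)"
  define m where "m = min (1 / jbr p) (1 / jbr \<tau>)"
  have X: "X\<^sup>2 = 1 + (\<tau> - \<mu>)\<^sup>2" "0 < X"
    unfolding X_def by (auto simp: jbr_squared jbr_pos)
  have "1 / (1 + (\<tau> - \<mu>)\<^sup>2)\<^sup>2 * (1 / jbr (\<mu> - lam)) * (1 / (\<bar>p\<bar> * jbr (\<mu> / p)))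
      \<le> 1 / (1 + (\<tau> - \<mu>)\<^sup>2)\<^sup>2 * (2 * X / jbr (\<tau> - lam)) * (2 * X * m)"
  proof (intro mult_mono mult_left_mono)
    show "1 / jbr (\<mu> - lam) \<le> 2 * X / jbr (\<tau> - lam)"
      unfolding X_def using inverse_jbr_le_shift[of "\<mu> - lam" "\<tau> - lam"] by simp
    show "1 / (\<bar>p\<bar> * jbr (\<mu> / p)) \<le> 2 * X * m"
      unfolding X_def m_def by (rule inverse_scaled_jbr_le[OF assms])
  qed (use X(2) jbr_pos[of "\<tau> - lam"] jbr_pos[of "\<mu> - lam"] jbr_pos[of "\<mu> / p"]
      in \<open>auto simp: add_pos_nonneg less_imp_le\<close>)
  also have "\<dots> = 4 * inverse (X\<^sup>2) * (1 / jbr (\<tau> - lam) * m)"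
    unfolding X(1)[symmetric] using X(2) by (simp add: power2_eq_square field_simps)
  finally show ?thesis
    unfolding X(1) m_def .
qed

lemma first_term_le:
  fixes p \<tau> lam \<alpha> :: real
  assumes "2 \<le> \<alpha>"
  shows "1 / jbr (\<tau> - lam) powr \<alpha> * min (1 / jbr p) (1 / jbr lam)
    \<le> 2 * (1 / jbr (\<tau> - lam) * min (1 / jbr p) (1 / jbr \<tau>))"
proof -
  define x where "x = jbr (\<tau> - lam)"
  have x: "1 \<le> x"
    unfolding x_def by (rule jbr_ge_1)
  have "x\<^sup>2 \<le> x powr \<alpha>"
    using powr_mono[OF assms x] x by (simp add: powr_numeral)
  hence "1 / x powr \<alpha> \<le> 1 / x\<^sup>2"
    using x by (intro divide_left_mono) auto
  moreover have "min (1 / jbr p) (1 / jbr lam) \<le> 2 * x * min (1 / jbr p) (1 / jbr \<tau>)"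
  proof -
    have "1 / jbr p \<le> 2 * x * (1 / jbr p)"
      using x jbr_pos[of p] by (simp add: field_simps)
    moreover have "1 / jbr lam \<le> 2 * x * (1 / jbr \<tau>)"
      using inverse_jbr_le_shift[of lam \<tau>] unfolding x_def by simp
    ultimately show ?thesis
      using x by (auto simp: min_mult_distrib_left min_le_iff_disj)
  qed
  moreover have "0 \<le> min (1 / jbr p) (1 / jbr lam)"
    using jbr_pos[of p] jbr_pos[of lam] by simp
  ultimately have "1 / x powr \<alpha> * min (1 / jbr p) (1 / jbr lam)
      \<le> 1 / x\<^sup>2 * (2 * x * min (1 / jbr p) (1 / jbr \<tau>))"
    using x by (intro mult_mono) auto
  also have "\<dots> = 2 * (1 / x * min (1 / jbr p) (1 / jbr \<tau>))"
    using x by (simp add: power2_eq_square field_simps)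
  finally show ?thesis
    unfolding x_def .
qed

lemma norm_integral_le_inverse_square:
  fixes f :: "real \<Rightarrow> 'a::{banach, second_countable_topology}"
  assumes f: "\<And>\<mu>. norm (f \<mu>) \<le> c * inverse (1 + (\<tau> - \<mu>)\<^sup>2)"
  shows "norm (LINT \<mu>|lborel. f \<mu>) \<le> c * pi"
proof (cases "integrable lborel f")
  case True
  have "norm (LINT \<mu>|lborel. f \<mu>) \<le> (LINT \<mu>|lborel. c * inverse (1 + (\<tau> - \<mu>)\<^sup>2))"
    using True f integrable_inverse_1_plus_square_shift(1)
    by (intro integral_norm_bound[THEN order_trans] integral_mono integrable_norm integrable_mult_right)
  thus ?thesis
    by (simp add: integral_inverse_1_plus_square_shift)
next
  case False
  have "norm (f \<tau>) \<le> c"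
    using f[of \<tau>] by simp
  hence "0 \<le> c"
    using norm_ge_zero[of "f \<tau>"] by linarith
  thus ?thesis
    using False by (simp add: not_integrable_integral_eq)
qed

lemma mult_mono4:
  fixes a b c d A B C D :: real
  assumes "0 \<le> a" "a \<le> A" "0 \<le> b" "b \<le> B" "0 \<le> c" "c \<le> C" "0 \<le> d" "d \<le> D"
  shows "a * b * c * d \<le> A * B * C * D"
  using assms by (intro mult_mono) (auto intro: mult_nonneg_nonneg order_trans)

lemma norm_kernel_integral_le:
  fixes P HP E HE :: "real \<Rightarrow> complex" and p :: real
  assumes K: "0 \<le> K" and P: "\<And>y. norm (P y) \<le> K / (1 + y\<^sup>2)\<^sup>2"
    and HP: "\<And>y. norm (HP y) \<le> K / jbr y" and E: "\<And>y. norm (E y) \<le> K / jbr y"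
    and HE: "\<And>y. norm (HE y) \<le> K / jbr y" and p: "1 \<le> \<bar>p\<bar>"
  shows "norm (LINT \<mu>|lborel.
      P (\<tau> - \<mu>) * P (\<mu> - lam) * (1 / complex_of_real p) * HE (\<mu> / p)
      + P (\<tau> - \<mu>) * HP (\<mu> - lam) * (1 / complex_of_real p) * E (\<mu> / p))
    \<le> 8 * K ^ 3 * pi * (1 / jbr (\<tau> - lam) * min (1 / jbr p) (1 / jbr \<tau>))"
proof -
  define B where "B = 1 / jbr (\<tau> - lam) * min (1 / jbr p) (1 / jbr \<tau>)"
  have P': "norm (P y) \<le> K / jbr y" for y
    using P[of y] divide_le_divide_jbr[OF K, of y] by linarith
  have norm_p: "norm (1 / complex_of_real p) = 1 / \<bar>p\<bar>"
    by (simp add: norm_divide)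
  have "norm (P (\<tau> - \<mu>) * P (\<mu> - lam) * (1 / complex_of_real p) * HE (\<mu> / p)
      + P (\<tau> - \<mu>) * HP (\<mu> - lam) * (1 / complex_of_real p) * E (\<mu> / p))
    \<le> (8 * K ^ 3 * B) * inverse (1 + (\<tau> - \<mu>)\<^sup>2)" for \<mu>
  proof -
    define Q where "Q = K / (1 + (\<tau> - \<mu>)\<^sup>2)\<^sup>2 * (K / jbr (\<mu> - lam)) * (1 / \<bar>p\<bar>) * (K / jbr (\<mu> / p))"
    have first: "norm (P (\<tau> - \<mu>) * P (\<mu> - lam) * (1 / complex_of_real p) * HE (\<mu> / p)) \<le> Q"
      unfolding norm_mult norm_p Q_def by (rule mult_mono4) (use P P' HE in auto)
    have second: "norm (P (\<tau> - \<mu>) * HP (\<mu> - lam) * (1 / complex_of_real p) * E (\<mu> / p)) \<le> Q"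
      unfolding norm_mult norm_p Q_def by (rule mult_mono4) (use P HP E in auto)
    have "Q \<le> 4 * K ^ 3 * B * inverse (1 + (\<tau> - \<mu>)\<^sup>2)"
    proof -
      have "Q = K ^ 3 * (1 / (1 + (\<tau> - \<mu>)\<^sup>2)\<^sup>2 * (1 / jbr (\<mu> - lam)) * (1 / (\<bar>p\<bar> * jbr (\<mu> / p))))"
        unfolding Q_def by (simp add: power3_eq_cube field_simps)
      also have "\<dots> \<le> K ^ 3 * (4 * inverse (1 + (\<tau> - \<mu>)\<^sup>2) * B)"
        unfolding B_def using K by (intro mult_left_mono kernel_weight_le p) auto
      finally show ?thesis
        by (simp add: mult_ac)
    qed
    thus ?thesis
      using first second norm_triangle_ineq[of "P (\<tau> - \<mu>) * P (\<mu> - lam) * (1 / complex_of_real p) * HE (\<mu> / p)"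
          "P (\<tau> - \<mu>) * HP (\<mu> - lam) * (1 / complex_of_real p) * E (\<mu> / p)"]
      by linarith
  qed
  hence "norm (LINT \<mu>|lborel.
      P (\<tau> - \<mu>) * P (\<mu> - lam) * (1 / complex_of_real p) * HE (\<mu> / p)
      + P (\<tau> - \<mu>) * HP (\<mu> - lam) * (1 / complex_of_real p) * E (\<mu> / p)) \<le> (8 * K ^ 3 * B) * pi"
    by (rule norm_integral_le_inverse_square)
  thus ?thesis
    unfolding B_def by (simp add: mult_ac)
qed

lemma norm_KG_le:
  assumes "schwartz \<eta>" and "cutoff \<phi>"
  shows "\<exists>K\<ge>0. \<forall>\<tau> lam (\<Phi>::int). \<Phi> \<noteq> 0 \<longrightarrow>
    cmod (KG \<phi> \<eta> \<tau> lam \<Phi>) \<le> K * (1 / jbr (\<tau> - lam) * min (1 / jbr (of_int \<Phi>)) (1 / jbr \<tau>))"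
proof -
  let ?P = "fourier (\<lambda>t. complex_of_real (\<phi> t))" and ?E = "fourier \<eta>"
  obtain Kp where Kp: "0 \<le> Kp" "\<And>y. norm (?P y) \<le> Kp / (1 + y\<^sup>2)\<^sup>2" "\<And>y. norm (hilbert ?P y) \<le> Kp / jbr y"
    using fourier_schwartz_bounds[OF cutoff_schwartz[OF assms(2)]] by blast
  obtain Ke where Ke: "0 \<le> Ke" "\<And>y. norm (?E y) \<le> Ke / (1 + y\<^sup>2)\<^sup>2" "\<And>y. norm (hilbert ?E y) \<le> Ke / jbr y"
    using fourier_schwartz_bounds[OF assms(1)] by blast
  define K where "K = max Kp Ke"
  have K: "0 \<le> K" "Kp \<le> K" "Ke \<le> K"
    using Kp(1) unfolding K_def by auto
  have K_decay: "C \<le> K \<Longrightarrow> C / (1 + y\<^sup>2)\<^sup>2 \<le> K / (1 + y\<^sup>2)\<^sup>2" for C y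
    by (simp add: divide_right_mono)
  have K_jbr: "C \<le> K \<Longrightarrow> C / jbr y \<le> K / jbr y" for C y
    using jbr_pos[of y] by (simp add: divide_right_mono)
  have P: "norm (?P y) \<le> K / (1 + y\<^sup>2)\<^sup>2" for y
    using Kp(2)[of y] K_decay[OF K(2), of y] by linarith
  have HP: "norm (hilbert ?P y) \<le> K / jbr y" for y
    using Kp(3)[of y] K_jbr[OF K(2), of y] by linarith
  have E: "norm (?E y) \<le> K / jbr y" for y
    using Ke(2)[of y] K_decay[OF K(3), of y] divide_le_divide_jbr[OF K(1), of y] by linarith
  have HE: "norm (hilbert ?E y) \<le> K / jbr y" for y
    using Ke(3)[of y] K_jbr[OF K(3), of y] by linarith
  show ?thesis
  proof (intro exI[of _ "8 * K ^ 3 * pi"] conjI allI impI)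
    fix \<tau> lam :: real and \<Phi> :: int
    assume "\<Phi> \<noteq> 0"
    hence "1 \<le> \<bar>real_of_int \<Phi>\<bar>"
      by linarith
    thus "cmod (KG \<phi> \<eta> \<tau> lam \<Phi>) \<le> 8 * K ^ 3 * pi * (1 / jbr (\<tau> - lam) * min (1 / jbr (of_int \<Phi>)) (1 / jbr \<tau>))"
      unfolding KG_def using norm_kernel_integral_le[OF K(1) P HP E HE, of "of_int \<Phi>" \<tau> lam]
      by simp
  qed (use K in simp)
qed

theorem mainTheorem8:
  fixes \<eta> :: "real \<Rightarrow> complex" and \<phi> :: "real \<Rightarrow> real"
  assumes "schwartz \<eta>" and "cutoff \<phi>"
  shows "\<exists>\<alpha>\<^sub>0>0. \<forall>\<alpha>\<ge>\<alpha>\<^sub>0. \<exists>C>0. \<forall>\<tau> lam (\<Phi>::int). \<Phi> \<noteq> 0 \<longrightarrow>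
     (let A = 1 / jbr (\<tau> - lam) powr \<alpha> * min (1 / jbr (of_int \<Phi>)) (1 / jbr lam)
            + 1 / jbr (\<tau> - lam) * min (1 / jbr (of_int \<Phi>)) (1 / jbr \<tau>);
          B = 1 / jbr (\<tau> - lam) * min (1 / jbr (of_int \<Phi>)) (1 / jbr \<tau>)
      in cmod (KG \<phi> \<eta> \<tau> lam \<Phi>) \<le> C * A \<and> A \<le> C * B)"
proof -
  obtain K where K: "0 \<le> K" and KG: "\<And>\<tau> lam (\<Phi>::int). \<Phi> \<noteq> 0 \<Longrightarrow>
      cmod (KG \<phi> \<eta> \<tau> lam \<Phi>) \<le> K * (1 / jbr (\<tau> - lam) * min (1 / jbr (of_int \<Phi>)) (1 / jbr \<tau>))"
    using norm_KG_le[OF assms] by blast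
  show ?thesis
  proof (rule exI[of _ 2], unfold Let_def, intro conjI allI impI exI[of _ "K + 3"])
    fix \<alpha> \<tau> lam :: real and \<Phi> :: int
    assume \<alpha>: "2 \<le> \<alpha>" and "\<Phi> \<noteq> 0"
    let ?T = "1 / jbr (\<tau> - lam) powr \<alpha> * min (1 / jbr (of_int \<Phi>)) (1 / jbr lam)"
    let ?B = "1 / jbr (\<tau> - lam) * min (1 / jbr (of_int \<Phi>)) (1 / jbr \<tau>)"
    have T: "0 \<le> ?T" "?T \<le> 2 * ?B"
      using first_term_le[OF \<alpha>] jbr_pos[of lam] jbr_pos[of "of_int \<Phi>"] by simp_all
    have B: "0 \<le> ?B"
      using jbr_pos[of \<tau>] jbr_pos[of "of_int \<Phi>"] jbr_pos[of "\<tau> - lam"] by simp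
    have "cmod (KG \<phi> \<eta> \<tau> lam \<Phi>) \<le> K * ?B"
      using KG[OF \<open>\<Phi> \<noteq> 0\<close>] .
    also have "\<dots> \<le> (K + 3) * (?T + ?B)"
      using K T B by (intro mult_mono) auto
    finally show "cmod (KG \<phi> \<eta> \<tau> lam \<Phi>) \<le> (K + 3) * (?T + ?B)" .
    have "?T + ?B \<le> 3 * ?B"
      using T(2) by simp
    also have "\<dots> \<le> (K + 3) * ?B"
      using K B by (intro mult_right_mono) auto
    finally show "?T + ?B \<le> (K + 3) * ?B" .
  qed (use K in simp_all)
qed

end
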